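(* Let $\vartheta$ be a primitive semi-compatible random substitution with topological entropy $s$, and suppose $\mathcal P(q)\neq\varnothing$ for at least one $q\in\mathbb N$. Then \[ s=\limsup_{q\to\infty}\frac1q\log(\#\mathcal P(q)). \]
   Context: Let $\mathcal A=\{a_1,\dots,a_n\}$ be a finite alphabet. A random substitution is a map $\vartheta$ from $\mathcal A$ to finite non-empty sets of finite non-empty words, extended to words by $\vartheta(u_1\cdots u_m)=\{w_1\cdots w_m: w_k\in\vartheta(u_k)\}$ and to sets of words by unions; powers $\vartheta^m$ are compositions. $\vartheta$ is semi-compatible if for each $a$ all words in $\vartheta(a)$ have the same vector of letter counts; the substitution matrix $M_{ij}$ is the number of $a_i$ in any word of $\vartheta(a_j)$; primitive means $M$ is a primitive matrix. The language $\mathcal L$ is the set of all subwords (contiguous factors) of words in $\vartheta^m(a)$, $a\in\mathcal A$, $m\in\mathbb N$; $\mathcal L_\ell$ its words of length $\ell$; $s=\lim_{\ell\to\infty}\frac1\ell\log\#\mathcal L_\ell$. The set of periodic words of period $q$ is $\mathcal P(q)=\{u\in\mathcal L: |u|=q,\ u^N\in\mathcal L\text{ for all }N\in\mathbb N\}$, where $u^N$ is the $N$-fold concatenation of $u$. *)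

theory Defs
  imports "HOL-Analysis.Analysis" "HOL-Library.Sublist"
begin

definition random_subst :: "('a::finite \<Rightarrow> 'a list set) \<Rightarrow> bool" where
  "random_subst \<theta> \<longleftrightarrow> (\<forall>a. finite (\<theta> a) \<and> \<theta> a \<noteq> {} \<and> (\<forall>w\<in>\<theta> a. w \<noteq> []))"

definition subst_word :: "('a \<Rightarrow> 'a list set) \<Rightarrow> 'a list \<Rightarrow> 'a list set" where
  "subst_word \<theta> u = {concat ws | ws. length ws = length u \<and> (\<forall>i<length u. ws ! i \<in> \<theta> (u ! i))}"

definition subst_set :: "('a \<Rightarrow> 'a list set) \<Rightarrow> 'a list set \<Rightarrow> 'a list set" where
  "subst_set \<theta> W = (\<Union>w\<in>W. subst_word \<theta> w)"

definition subst_pow :: "('a \<Rightarrow> 'a list set) \<Rightarrow> nat \<Rightarrow> 'a \<Rightarrow> 'a list set" where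
  "subst_pow \<theta> m a = (subst_set \<theta> ^^ m) {[a]}"

definition semi_compatible :: "('a \<Rightarrow> 'a list set) \<Rightarrow> bool" where
  "semi_compatible \<theta> \<longleftrightarrow>
     (\<forall>a. \<forall>v\<in>\<theta> a. \<forall>w\<in>\<theta> a. \<forall>b. count_list v b = count_list w b)"

text \<open>Substitution matrix: M b a = number of b's in (any) word of \<theta>(a).\<close>
definition subst_matrix :: "('a \<Rightarrow> 'a list set) \<Rightarrow> 'a \<Rightarrow> 'a \<Rightarrow> nat" where
  "subst_matrix \<theta> b a = count_list (SOME w. w \<in> \<theta> a) b"

fun mat_pow :: "('a::finite \<Rightarrow> 'a \<Rightarrow> nat) \<Rightarrow> nat \<Rightarrow> 'a \<Rightarrow> 'a \<Rightarrow> nat" where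
  "mat_pow M 0 = (\<lambda>i j. if i = j then 1 else 0)"
| "mat_pow M (Suc k) = (\<lambda>i j. \<Sum>l\<in>UNIV. M i l * mat_pow M k l j)"

definition primitive_matrix :: "('a::finite \<Rightarrow> 'a \<Rightarrow> nat) \<Rightarrow> bool" where
  "primitive_matrix M \<longleftrightarrow> (\<exists>k>0. \<forall>i j. mat_pow M k i j > 0)"

definition primitive_subst :: "('a::finite \<Rightarrow> 'a list set) \<Rightarrow> bool" where
  "primitive_subst \<theta> \<longleftrightarrow> primitive_matrix (subst_matrix \<theta>)"

definition lang :: "('a \<Rightarrow> 'a list set) \<Rightarrow> 'a list set" where
  "lang \<theta> = {u. \<exists>a m w. w \<in> subst_pow \<theta> m a \<and> sublist u w}"

definition lang_len :: "('a \<Rightarrow> 'a list set) \<Rightarrow> nat \<Rightarrow> 'a list set" where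
  "lang_len \<theta> l = {u \<in> lang \<theta>. length u = l}"

definition rs_entropy :: "('a \<Rightarrow> 'a list set) \<Rightarrow> real" where
  "rs_entropy \<theta> = lim (\<lambda>l. ln (real (card (lang_len \<theta> l))) / real l)"

definition word_pow :: "'a list \<Rightarrow> nat \<Rightarrow> 'a list" where
  "word_pow u N = concat (replicate N u)"

definition periodic_words :: "('a \<Rightarrow> 'a list set) \<Rightarrow> nat \<Rightarrow> 'a list set" where
  "periodic_words \<theta> q = {u \<in> lang \<theta>. length u = q \<and> (\<forall>N. word_pow u N \<in> lang \<theta>)}"

definition per_growth :: "('a \<Rightarrow> 'a list set) \<Rightarrow> nat \<Rightarrow> ereal" where
  "per_growth \<theta> q = (if periodic_words \<theta> q = {} then -\<infinity>
      else ereal (ln (real (card (periodic_words \<theta> q))) / real q))"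

end

theory Submission imports Defs "HOL-Real_Asymp.Real_Asymp" begin

text \<open>If \<open>u\<close> is a periodic legal word, every word in \<open>\<theta>\<^sup>m(u\<^sup>k)\<close> is again periodic,
  of length \<open>k |\<theta>\<^sup>m(u)|\<close>, and there are at least \<open>exp (\<sigma>\<^sub>m k |\<theta>\<^sup>m(u)|)\<close> of them,
  where \<open>\<sigma>\<^sub>m\<close> is the least of the rates \<open>ln #\<theta>\<^sup>m(a) / |\<theta>\<^sup>m(a)|\<close> over the letters \<open>a\<close>.
  So the limsup is at least \<open>\<sigma>\<^sub>m\<close> for every \<open>m\<close>, and it remains to see that \<open>\<sigma>\<^sub>m\<close>
  comes arbitrarily close to \<open>s\<close>. Covering \<open>\<L>\<^sub>n\<close> by windows in images \<open>\<theta>\<^sup>m(V)\<close> of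
  short words \<open>V\<close> shows that the largest rate \<open>\<rho>\<^sub>m\<close> is at least
  \<open>s - ln #\<A> / min\<^sub>a |\<theta>\<^sup>m(a)|\<close>; and primitivity mixes the rates: every \<open>\<theta>\<^sup>K(a)\<close>
  contains every letter, so every \<open>K\<close> steps \<open>\<sigma>\<close> gains a fixed fraction of \<open>\<rho> - \<sigma>\<close>.
  The upper bound is immediate from \<open>\<P>(q) \<subseteq> \<L>\<^sub>q\<close>, with \<open>s\<close> a limit by Fekete's lemma.\<close>

definition conc :: "'b list set \<Rightarrow> 'b list set \<Rightarrow> 'b list set" where
  "conc X Y = {x @ y | x y. x \<in> X \<and> y \<in> Y}"

lemma conc_iff: "z \<in> conc X Y \<longleftrightarrow> (\<exists>x\<in>X. \<exists>y\<in>Y. z = x @ y)"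
  unfolding conc_def by blast

lemma concI: "x \<in> X \<Longrightarrow> y \<in> Y \<Longrightarrow> x @ y \<in> conc X Y"
  unfolding conc_def by blast

lemma conc_Nil [simp]: "conc {[]} X = X" "conc X {[]} = X"
  unfolding conc_def by auto

lemma conc_assoc: "conc (conc X Y) Z = conc X (conc Y Z)"
proof (rule set_eqI, rule iffI)
  fix w assume "w \<in> conc (conc X Y) Z"
  then obtain x y z where "x \<in> X" "y \<in> Y" "z \<in> Z" "w = x @ y @ z"
    unfolding conc_def by auto
  then show "w \<in> conc X (conc Y Z)" unfolding conc_def by blast
next
  fix w assume "w \<in> conc X (conc Y Z)"
  then obtain x y z where "x \<in> X" "y \<in> Y" "z \<in> Z" "w = (x @ y) @ z"
    unfolding conc_def by auto
  then show "w \<in> conc (conc X Y) Z" unfolding conc_def by blast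
qed

lemma conc_image: "conc X Y = (\<lambda>(x, y). x @ y) ` (X \<times> Y)"
  unfolding conc_def by auto

lemma finite_conc: "finite X \<Longrightarrow> finite Y \<Longrightarrow> finite (conc X Y)"
  unfolding conc_image by simp

lemma conc_empty_iff: "conc X Y = {} \<longleftrightarrow> X = {} \<or> Y = {}"
  unfolding conc_def by auto

lemma card_conc:
  assumes "\<And>x. x \<in> X \<Longrightarrow> length x = l" and "finite X" and "finite Y"
  shows "card (conc X Y) = card X * card Y"
proof -
  have "inj_on (\<lambda>(x, y). x @ y) (X \<times> Y)"
    using assms(1) by (auto simp: inj_on_def append_eq_append_conv)
  then show ?thesis
    unfolding conc_image by (simp add: card_image card_cartesian_product)
qed

lemma subst_word_Nil [simp]: "subst_word \<theta> [] = {[]}"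
  by (auto simp: subst_word_def)

lemma subst_word_Cons: "subst_word \<theta> (c # u) = conc (\<theta> c) (subst_word \<theta> u)"
proof (rule set_eqI, rule iffI)
  fix z assume "z \<in> subst_word \<theta> (c # u)"
  then obtain ws where ws: "z = concat ws" "length ws = Suc (length u)"
    "\<forall>i<Suc (length u). ws ! i \<in> \<theta> ((c#u) ! i)" by (auto simp: subst_word_def)
  then obtain x ws' where x: "ws = x # ws'" by (cases ws) auto
  have "x \<in> \<theta> c" using ws(3) x by force
  moreover have "concat ws' \<in> subst_word \<theta> u"
    unfolding subst_word_def using ws x by force
  ultimately show "z \<in> conc (\<theta> c) (subst_word \<theta> u)"
    unfolding conc_def using ws(1) x by auto
next
  fix z assume "z \<in> conc (\<theta> c) (subst_word \<theta> u)"
  then obtain x ws where z: "z = x @ concat ws" "x \<in> \<theta> c" "length ws = length u"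
     "\<forall>i<length u. ws ! i \<in> \<theta> (u ! i)" by (auto simp: conc_def subst_word_def)
  have "\<forall>i<Suc (length u). (x#ws) ! i \<in> \<theta> ((c#u) ! i)"
    using z by (auto simp: nth_Cons split: nat.splits)
  then show "z \<in> subst_word \<theta> (c # u)" unfolding subst_word_def using z
    by (auto intro!: exI[of _ "x#ws"])
qed

lemma subst_word_append: "subst_word \<theta> (u @ v) = conc (subst_word \<theta> u) (subst_word \<theta> v)"
  by (induction u) (simp_all add: subst_word_Cons conc_assoc)

lemma subst_set_conc: "subst_set \<theta> (conc X Y) = conc (subst_set \<theta> X) (subst_set \<theta> Y)"
proof (rule set_eqI, rule iffI)
  fix z assume "z \<in> subst_set \<theta> (conc X Y)"
  then obtain w where w: "w \<in> conc X Y" "z \<in> subst_word \<theta> w" unfolding subst_set_def by blast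
  then obtain x y where xy: "x \<in> X" "y \<in> Y" "w = x @ y" unfolding conc_iff by blast
  have "z \<in> conc (subst_word \<theta> x) (subst_word \<theta> y)" using w(2) unfolding xy(3) subst_word_append .
  then obtain a b where ab: "a \<in> subst_word \<theta> x" "b \<in> subst_word \<theta> y" "z = a @ b"
    unfolding conc_iff by blast
  have "a \<in> subst_set \<theta> X" using ab(1) xy(1) unfolding subst_set_def by blast
  moreover have "b \<in> subst_set \<theta> Y" using ab(2) xy(2) unfolding subst_set_def by blast
  ultimately show "z \<in> conc (subst_set \<theta> X) (subst_set \<theta> Y)"
    unfolding ab(3) by (rule concI)
next
  fix z assume "z \<in> conc (subst_set \<theta> X) (subst_set \<theta> Y)"
  then obtain a b where ab: "a \<in> subst_set \<theta> X" "b \<in> subst_set \<theta> Y" "z = a @ b"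
    unfolding conc_iff by blast
  obtain x where x: "x \<in> X" "a \<in> subst_word \<theta> x" using ab(1) unfolding subst_set_def by blast
  obtain y where y: "y \<in> Y" "b \<in> subst_word \<theta> y" using ab(2) unfolding subst_set_def by blast
  have "z \<in> subst_word \<theta> (x @ y)" unfolding subst_word_append ab(3) using x(2) y(2) by (rule concI)
  moreover have "x @ y \<in> conc X Y" using x(1) y(1) by (rule concI)
  ultimately show "z \<in> subst_set \<theta> (conc X Y)" unfolding subst_set_def by blast
qed

definition subst_iter :: "('a \<Rightarrow> 'a list set) \<Rightarrow> nat \<Rightarrow> 'a list \<Rightarrow> 'a list set" where
  "subst_iter \<theta> m w = (subst_set \<theta> ^^ m) {w}"

lemma funpow_subst_set: "(subst_set \<theta> ^^ m) W = (\<Union>w\<in>W. subst_iter \<theta> m w)"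
proof (induction m arbitrary: W)
  case 0
  then show ?case by (auto simp: subst_iter_def)
next
  case (Suc m)
  then show ?case by (auto simp: subst_iter_def subst_set_def)
qed

lemma subst_iter_0 [simp]: "subst_iter \<theta> 0 w = {w}"
  by (simp add: subst_iter_def)

lemma subst_iter_Suc: "subst_iter \<theta> (Suc m) w = (\<Union>y\<in>subst_iter \<theta> m w. subst_word \<theta> y)"
  by (simp add: subst_iter_def subst_set_def)

lemma subst_iter_add: "subst_iter \<theta> (m + k) w = (\<Union>y\<in>subst_iter \<theta> k w. subst_iter \<theta> m y)"
proof -
  have "subst_iter \<theta> (m + k) w = (subst_set \<theta> ^^ m) (subst_iter \<theta> k w)"
    by (simp add: subst_iter_def funpow_add)
  then show ?thesis by (simp only: funpow_subst_set)
qed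

lemma subst_iter_Nil [simp]: "subst_iter \<theta> m [] = {[]}"
  by (induction m) (simp_all add: subst_iter_Suc)

lemma subst_iter_append: "subst_iter \<theta> m (u @ v) = conc (subst_iter \<theta> m u) (subst_iter \<theta> m v)"
proof (induction m)
  case 0
  then show ?case by (simp add: conc_def)
next
  case (Suc m)
  then show ?case by (simp add: subst_iter_def subst_set_conc)
qed

lemma subst_iter_Cons: "subst_iter \<theta> m (c # v) = conc (subst_iter \<theta> m [c]) (subst_iter \<theta> m v)"
  using subst_iter_append[of \<theta> m "[c]" v] by simp

lemma subst_pow_eq_subst_iter: "subst_pow \<theta> m c = subst_iter \<theta> m [c]"
  by (simp add: subst_iter_def subst_pow_def)

lemma word_pow_Suc: "word_pow u (Suc N) = u @ word_pow u N"
  by (simp add: word_pow_def)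

lemma word_pow_mult: "word_pow (word_pow u k) N = word_pow u (k * N)"
  by (induction N) (simp_all add: word_pow_def replicate_add)

lemma sum_list_map_word_pow: "sum_list (map f (word_pow u k)) = k * sum_list (map f u)"
  by (induction k) (simp_all add: word_pow_Suc word_pow_def)

lemma subst_iter_word_pow: "z \<in> subst_iter \<theta> m w \<Longrightarrow> word_pow z N \<in> subst_iter \<theta> m (word_pow w N)"
  by (induction N) (simp_all add: word_pow_def subst_iter_append concI)

lemma subadditive_iterate:
  fixes a :: "nat \<Rightarrow> real"
  assumes "\<And>m n. a (m + n) \<le> a m + a n"
  shows "a (q * k + r) \<le> real q * a k + a r"
proof (induction q)
  case (Suc q)
  have "a (Suc q * k + r) = a (k + (q * k + r))" by (simp add: add.assoc)
  also have "\<dots> \<le> a k + a (q * k + r)" by (rule assms)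
  finally show ?case using Suc by (simp add: algebra_simps)
qed simp

lemma fekete_subadditive:
  fixes a :: "nat \<Rightarrow> real"
  assumes sub: "\<And>m n. a (m + n) \<le> a m + a n" and nonneg: "\<And>n. 0 \<le> a n"
  shows "(\<lambda>n. a n / real n) \<longlonglongrightarrow> (INF n\<in>{1..}. a n / real n)"
proof (rule LIMSEQ_I)
  let ?f = "\<lambda>n. a n / real n"
  define s where "s = (INF n\<in>{1..}. ?f n)"
  have low: "s \<le> ?f n" if "n \<ge> 1" for n
    unfolding s_def using that by (intro cINF_lower bdd_belowI2[of _ 0]) (auto simp: nonneg)
  fix r :: real assume r: "r > 0"
  obtain k where k: "k \<ge> 1" "?f k < s + r / 2"
    using cInf_lessD[of "?f ` {1..}" "s + r / 2"] r unfolding s_def by fastforce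
  define C where "C = Max (a ` {..<k})"
  have C: "a j \<le> C" if "j < k" for j
    unfolding C_def using that by (intro Max_ge) auto
  have "norm (?f n - s) < r" if n: "n \<ge> nat \<lceil>2 * C / r\<rceil> + 1" for n
  proof -
    have npos: "real n > 0" using n by simp
    have "a n \<le> real (n div k) * a k + a (n mod k)"
      using subadditive_iterate[OF sub, of "n div k" k "n mod k"] by simp
    also have "\<dots> \<le> real (n div k) * real k * ?f k + C"
      using C[of "n mod k"] k by (simp add: field_simps)
    also have "\<dots> \<le> real n * ?f k + C"
    proof -
      have "real (n div k) * real k \<le> real n"
        by (metis div_times_less_eq_dividend of_nat_le_iff of_nat_mult)
      then show ?thesis using nonneg[of k] by (intro add_right_mono mult_right_mono) auto
    qed
    finally have "?f n \<le> ?f k + C / real n"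
      using npos by (simp add: field_simps)
    moreover have "C / real n < r / 2"
    proof -
      have "2 * C / r < real n" using n by linarith
      then show ?thesis using r npos by (simp add: field_simps)
    qed
    ultimately have "?f n < s + r" using k by linarith
    then show ?thesis using low[of n] n by simp
  qed
  then show "\<exists>N. \<forall>n\<ge>N. norm (?f n - s) < r" by blast
qed

lemma ex_eq_Max_range: "\<exists>c. f c = Max (range f)"
  for f :: "'a::finite \<Rightarrow> 'b::linorder"
proof -
  have "Max (range f) \<in> range f" by (rule Max_in) auto
  then show ?thesis by (metis rangeE)
qed

lemma ex_eq_Min_range: "\<exists>c. f c = Min (range f)"
  for f :: "'a::finite \<Rightarrow> 'b::linorder"
proof -
  have "Min (range f) \<in> range f" by (rule Min_in) auto
  then show ?thesis by (metis rangeE)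
qed

lemma card_weighted_words_le:
  fixes f :: "'a::finite \<Rightarrow> nat"
  assumes "0 < L" and "\<And>c. L \<le> f c"
  shows "finite {V. (\<Sum>c\<leftarrow>V. f c) \<le> l}"
    and "card {V. (\<Sum>c\<leftarrow>V. f c) \<le> l} \<le> (l + 1) * CARD('a) ^ (l div L)"
proof -
  let ?T = "l div L"
  have sub: "{V. (\<Sum>c\<leftarrow>V. f c) \<le> l} \<subseteq> {V. set V \<subseteq> UNIV \<and> length V \<le> ?T}"
  proof safe
    fix V assume "(\<Sum>c\<leftarrow>V. f c) \<le> l"
    moreover have "length V * L \<le> (\<Sum>c\<leftarrow>V. f c)"
      using sum_list_mono[of V "\<lambda>_. L" f] assms(2) by (simp add: sum_list_triv)
    ultimately show "length V \<le> ?T"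
      using assms(1) by (simp add: less_eq_div_iff_mult_less_eq)
  qed simp
  have fin: "finite {V::'a list. set V \<subseteq> UNIV \<and> length V \<le> ?T}"
    by (rule finite_lists_length_le) simp
  then show "finite {V. (\<Sum>c\<leftarrow>V. f c) \<le> l}" using sub by (rule finite_subset[rotated])
  have "card {V. (\<Sum>c\<leftarrow>V. f c) \<le> l} \<le> card {V::'a list. set V \<subseteq> UNIV \<and> length V \<le> ?T}"
    using sub fin by (rule card_mono[rotated])
  also have "\<dots> = (\<Sum>i\<le>?T. CARD('a) ^ i)"
    using card_lists_length_le[of "UNIV::'a set" ?T] by simp
  also have "\<dots> \<le> (\<Sum>i\<le>?T. CARD('a) ^ ?T)"
    by (intro sum_mono power_increasing) (auto simp: Suc_le_eq)
  also have "\<dots> \<le> (l + 1) * CARD('a) ^ ?T"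
    by simp
  finally show "card {V. (\<Sum>c\<leftarrow>V. f c) \<le> l} \<le> (l + 1) * CARD('a) ^ ?T" .
qed

locale primitive_semi_compatible =
  fixes \<theta> :: "'a::finite \<Rightarrow> 'a list set"
  assumes random: "random_subst \<theta>"
    and primitive: "primitive_subst \<theta>"
    and semi_compatible: "semi_compatible \<theta>"
begin

abbreviation \<Theta> :: "nat \<Rightarrow> 'a list \<Rightarrow> 'a list set" where
  "\<Theta> \<equiv> subst_iter \<theta>"

abbreviation M :: "'a \<Rightarrow> 'a \<Rightarrow> nat" where
  "M \<equiv> subst_matrix \<theta>"

lemma finite_theta: "finite (\<theta> a)" and theta_nonempty: "\<theta> a \<noteq> {}"
  and Nil_notin_theta: "[] \<notin> \<theta> a"
  using random by (auto simp: random_subst_def)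

lemma finite_subst_iter: "finite (\<Theta> m w)" and subst_iter_nonempty: "\<Theta> m w \<noteq> {}"
proof -
  have word: "finite (subst_word \<theta> y) \<and> subst_word \<theta> y \<noteq> {}" for y
    by (induction y) (simp_all add: subst_word_Cons finite_theta theta_nonempty finite_conc conc_empty_iff)
  have "finite (\<Theta> m w) \<and> \<Theta> m w \<noteq> {}"
    by (induction m arbitrary: w) (use word in \<open>auto simp: subst_iter_Suc\<close>)
  then show "finite (\<Theta> m w)" "\<Theta> m w \<noteq> {}" by auto
qed

lemma card_subst_iter_pos: "0 < card (\<Theta> m w)"
  using finite_subst_iter subst_iter_nonempty by (simp add: card_gt_0_iff)

lemma length_subst_iter_ge: "z \<in> \<Theta> m w \<Longrightarrow> length w \<le> length z"
proof -
  have word: "length y \<le> length z" if "z \<in> subst_word \<theta> y" for y z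
    using that
  proof (induction y arbitrary: z)
    case (Cons c y)
    then obtain x z' where "x \<in> \<theta> c" "z' \<in> subst_word \<theta> y" "z = x @ z'"
      by (auto simp: subst_word_Cons conc_iff)
    with Cons.IH[of z'] Nil_notin_theta[of c] show ?case by (cases x) auto
  qed simp
  show "z \<in> \<Theta> m w \<Longrightarrow> length w \<le> length z"
    by (induction m arbitrary: z) (use word in \<open>fastforce simp: subst_iter_Suc\<close>)+
qed

text \<open>The only use of semi-compatibility.\<close>
lemma count_list_theta: "x \<in> \<theta> c \<Longrightarrow> count_list x b = M b c"
proof -
  assume x: "x \<in> \<theta> c"
  then have "(SOME w. w \<in> \<theta> c) \<in> \<theta> c" by (rule someI)
  then show ?thesis
    using semi_compatible x unfolding semi_compatible_def subst_matrix_def by blast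
qed

lemma count_list_subst_word:
  "z \<in> subst_word \<theta> y \<Longrightarrow> count_list z b = (\<Sum>l\<in>UNIV. count_list y l * M b l)"
proof (induction y arbitrary: z)
  case (Cons c y)
  then obtain x z' where xz: "x \<in> \<theta> c" "z' \<in> subst_word \<theta> y" "z = x @ z'"
    by (auto simp: subst_word_Cons conc_iff)
  have "(\<Sum>l\<in>UNIV. count_list (c # y) l * M b l)
      = (\<Sum>l\<in>UNIV. (if l = c then M b l else 0) + count_list y l * M b l)"
    by (intro sum.cong) auto
  also have "\<dots> = M b c + (\<Sum>l\<in>UNIV. count_list y l * M b l)"
    by (simp add: sum.distrib)
  finally show ?case using xz Cons.IH[of z'] count_list_theta[of x c b] by simp
qed simp

lemma count_list_subst_iter: "z \<in> \<Theta> m [a] \<Longrightarrow> count_list z b = mat_pow M m b a"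
proof (induction m arbitrary: z b)
  case (Suc m)
  then obtain y where y: "y \<in> \<Theta> m [a]" "z \<in> subst_word \<theta> y"
    by (auto simp: subst_iter_Suc)
  show ?case
    using count_list_subst_word[OF y(2)] Suc.IH[OF y(1)] by (simp add: mult.commute)
qed simp

definition len :: "nat \<Rightarrow> 'a \<Rightarrow> nat" where
  "len m a = (\<Sum>b\<in>UNIV. mat_pow M m b a)"

lemma length_subst_iter_letter: "z \<in> \<Theta> m [a] \<Longrightarrow> length z = len m a"
  using sum_count_set[of z UNIV] count_list_subst_iter[of z m a] by (simp add: len_def)

lemma length_subst_iter: "z \<in> \<Theta> m w \<Longrightarrow> length z = (\<Sum>c\<leftarrow>w. len m c)"
proof (induction w arbitrary: z)
  case (Cons c w)
  then obtain x z' where "x \<in> \<Theta> m [c]" "z' \<in> \<Theta> m w" "z = x @ z'"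
    by (auto simp: subst_iter_Cons[of _ _ c w] conc_iff)
  with Cons.IH[of z'] length_subst_iter_letter[of x m c] show ?case by simp
qed simp

lemma len_pos: "0 < len m a"
proof -
  obtain z where "z \<in> \<Theta> m [a]" using subst_iter_nonempty by blast
  then show ?thesis
    using length_subst_iter_ge[of z m "[a]"] length_subst_iter_letter[of z m a] by simp
qed

definition N :: "nat \<Rightarrow> 'a \<Rightarrow> nat" where
  "N m a = card (\<Theta> m [a])"

lemma N_pos: "0 < N m a"
  unfolding N_def by (rule card_subst_iter_pos)

lemma card_subst_iter: "card (\<Theta> m w) = (\<Prod>c\<leftarrow>w. N m c)"
proof (induction w)
  case (Cons c w)
  have "card (\<Theta> m (c # w)) = card (\<Theta> m [c]) * card (\<Theta> m w)"
    unfolding subst_iter_Cons[of _ _ c w]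
    by (rule card_conc[where l = "len m c"]) (auto simp: length_subst_iter_letter finite_subst_iter)
  then show ?case using Cons by (simp add: N_def)
qed simp

lemma ln_card_subst_iter: "ln (card (\<Theta> m w)) = (\<Sum>c\<leftarrow>w. ln (N m c))"
proof (induction w)
  case (Cons c w)
  then show ?case using card_subst_iter_pos[of m w] N_pos[of m c] by (simp add: card_subst_iter ln_mult)
qed simp

definition K :: nat where
  "K = (SOME k. 0 < k \<and> (\<forall>i j. 0 < mat_pow M k i j))"

lemma K_pos: "0 < K" and mat_pow_K_pos: "0 < mat_pow M K i j"
proof -
  have "\<exists>k. 0 < k \<and> (\<forall>i j. 0 < mat_pow M k i j)"
    using primitive by (simp add: primitive_subst_def primitive_matrix_def)
  then have "0 < K \<and> (\<forall>i j. 0 < mat_pow M K i j)"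
    unfolding K_def by (rule someI_ex)
  then show "0 < K" "0 < mat_pow M K i j" by auto
qed

lemma set_subst_iter_K: "y \<in> \<Theta> K [a] \<Longrightarrow> set y = UNIV"
proof -
  assume y: "y \<in> \<Theta> K [a]"
  have "b \<in> set y" for b
    using count_list_subst_iter[OF y, of b] mat_pow_K_pos[of b a] count_list_0_iff[of y b] by auto
  then show ?thesis by blast
qed

lemma lang_iff: "u \<in> lang \<theta> \<longleftrightarrow> (\<exists>a m w. w \<in> \<Theta> m [a] \<and> sublist u w)"
  by (simp add: lang_def subst_pow_eq_subst_iter)

lemma lang_sublist: "u \<in> lang \<theta> \<Longrightarrow> sublist v u \<Longrightarrow> v \<in> lang \<theta>"
  unfolding lang_iff by (meson sublist_order.order.trans)

lemma subst_iter_sublist: "sublist v y \<Longrightarrow> z \<in> \<Theta> m v \<Longrightarrow> \<exists>z'\<in>\<Theta> m y. sublist z z'"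
proof -
  assume "sublist v y" "z \<in> \<Theta> m v"
  moreover from \<open>sublist v y\<close> obtain p q where "y = p @ v @ q" by (auto simp: sublist_def)
  moreover obtain p' q' where "p' \<in> \<Theta> m p" "q' \<in> \<Theta> m q" using subst_iter_nonempty by blast
  ultimately have "p' @ z @ q' \<in> \<Theta> m y" by (simp add: subst_iter_append concI)
  then show ?thesis by (metis sublist_appendI)
qed

lemma subst_iter_lang: "v \<in> lang \<theta> \<Longrightarrow> z \<in> \<Theta> m v \<Longrightarrow> z \<in> lang \<theta>"
proof -
  assume "v \<in> lang \<theta>" "z \<in> \<Theta> m v"
  then obtain a k w where w: "w \<in> \<Theta> k [a]" "sublist v w" unfolding lang_iff by blast
  then obtain z' where "z' \<in> \<Theta> m w" "sublist z z'"
    using subst_iter_sublist \<open>z \<in> \<Theta> m v\<close> by blast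
  moreover have "z' \<in> \<Theta> (m + k) [a]" using w(1) \<open>z' \<in> \<Theta> m w\<close> by (auto simp: subst_iter_add)
  ultimately show ?thesis unfolding lang_iff by blast
qed

text \<open>An occurrence in \<open>\<theta>\<^sup>k(a)\<close> lifts to \<open>\<theta>\<^sup>k\<^sup>+\<^sup>K(a)\<close>, since \<open>\<theta>\<^sup>K(a)\<close> contains \<open>a\<close>.\<close>
lemma lang_deep: "x \<in> lang \<theta> \<Longrightarrow> \<exists>k\<ge>m. \<exists>b. \<exists>z\<in>\<Theta> k [b]. sublist x z"
proof -
  assume "x \<in> lang \<theta>"
  then obtain a k z where z: "z \<in> \<Theta> k [a]" "sublist x z" unfolding lang_iff by blast
  have "\<exists>z'\<in>\<Theta> (k + j * K) [a]. sublist x z'" for j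
  proof (induction j)
    case (Suc j)
    then obtain z' where z': "z' \<in> \<Theta> (k + j * K) [a]" "sublist x z'" by blast
    obtain y where y: "y \<in> \<Theta> K [a]" using subst_iter_nonempty by blast
    have "a \<in> set y" using set_subst_iter_K[OF y] by simp
    then have "sublist [a] y" by (metis in_set_conv_decomp sublist_appendI append_Cons append_Nil)
    then obtain z'' where "z'' \<in> \<Theta> (k + j * K) y" "sublist z' z''"
      using subst_iter_sublist z'(1) by blast
    moreover have "z'' \<in> \<Theta> (k + j * K + K) [a]"
      using y \<open>z'' \<in> \<Theta> (k + j * K) y\<close> subst_iter_add[of \<theta> "k + j * K" K] by blast
    moreover have "k + j * K + K = k + Suc j * K" by simp
    ultimately show ?case using z'(2) by (metis sublist_order.order.trans)
  qed (use z in auto)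
  moreover have "m \<le> k + m * K" using K_pos by (simp add: trans_le_add2)
  ultimately show ?thesis by blast
qed

definition Lmax :: "nat \<Rightarrow> nat" where
  "Lmax m = Max (range (len m))"

definition Lmin :: "nat \<Rightarrow> nat" where
  "Lmin m = Min (range (len m))"

lemma len_le_Lmax: "len m c \<le> Lmax m"
  unfolding Lmax_def by simp

lemma Lmin_le_len: "Lmin m \<le> len m c"
  unfolding Lmin_def by simp

lemma Lmin_pos: "0 < Lmin m"
  unfolding Lmin_def using len_pos by simp

lemma Lmax_attained: "\<exists>c. len m c = Lmax m"
  unfolding Lmax_def by (rule ex_eq_Max_range)

lemma Lmin_attained: "\<exists>c. len m c = Lmin m"
  unfolding Lmin_def by (rule ex_eq_Min_range)

lemma len_add_K: "y \<in> \<Theta> K [a] \<Longrightarrow> len (m + K) a = (\<Sum>c\<leftarrow>y. len m c)"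
proof -
  assume y: "y \<in> \<Theta> K [a]"
  obtain z where z: "z \<in> \<Theta> m y" using subst_iter_nonempty by blast
  then have "z \<in> \<Theta> (m + K) [a]" using y by (auto simp: subst_iter_add)
  then show ?thesis using length_subst_iter_letter length_subst_iter z by metis
qed

lemma Lmax_add_K: "Lmax (m + K) \<le> Lmax K * Lmax m"
proof -
  obtain a where a: "len (m + K) a = Lmax (m + K)" using Lmax_attained by blast
  obtain y where y: "y \<in> \<Theta> K [a]" using subst_iter_nonempty by blast
  have "(\<Sum>c\<leftarrow>y. len m c) \<le> (\<Sum>c\<leftarrow>y. Lmax m)"
    by (intro sum_list_mono len_le_Lmax)
  also have "\<dots> \<le> Lmax K * Lmax m"
    using length_subst_iter_letter[OF y] len_le_Lmax[of K a] by (simp add: sum_list_triv)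
  finally show ?thesis using a len_add_K[OF y, of m] by simp
qed

lemma Lmax_le_Lmin_add_K: "Lmax m \<le> Lmin (m + K)"
proof -
  obtain a where a: "len (m + K) a = Lmin (m + K)" using Lmin_attained by blast
  obtain c where c: "len m c = Lmax m" using Lmax_attained by blast
  obtain y where y: "y \<in> \<Theta> K [a]" using subst_iter_nonempty by blast
  have "len m c \<le> (\<Sum>c\<leftarrow>y. len m c)"
    using set_subst_iter_K[OF y] by (simp add: member_le_sum_list)
  then show ?thesis using a c len_add_K[OF y, of m] by simp
qed

lemma Lmin_add_K_double:
  assumes "2 \<le> CARD('a)" shows "2 * Lmin m \<le> Lmin (m + K)"
proof -
  obtain a where a: "len (m + K) a = Lmin (m + K)" using Lmin_attained by blast
  obtain y where y: "y \<in> \<Theta> K [a]" using subst_iter_nonempty by blast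
  have "2 \<le> length y"
    using assms card_length[of y] set_subst_iter_K[OF y] by simp
  then have "2 * Lmin m \<le> (\<Sum>c\<leftarrow>y. Lmin m)" by (simp add: sum_list_triv)
  also have "\<dots> \<le> (\<Sum>c\<leftarrow>y. len m c)" by (intro sum_list_mono Lmin_le_len)
  finally show ?thesis using a len_add_K[OF y, of m] by simp
qed

definition rate :: "nat \<Rightarrow> 'a \<Rightarrow> real" where
  "rate m a = ln (N m a) / len m a"

definition rate_max :: "nat \<Rightarrow> real" where
  "rate_max m = Max (range (rate m))"

definition rate_min :: "nat \<Rightarrow> real" where
  "rate_min m = Min (range (rate m))"

lemma rate_max_attained: "\<exists>c. rate m c = rate_max m"
  unfolding rate_max_def by (rule ex_eq_Max_range)

lemma rate_min_attained: "\<exists>c. rate m c = rate_min m"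
  unfolding rate_min_def by (rule ex_eq_Min_range)

lemma rate_le_rate_max: "rate m a \<le> rate_max m"
  unfolding rate_max_def by simp

lemma rate_min_le_rate: "rate_min m \<le> rate m a"
  unfolding rate_min_def by simp

lemma rate_min_nonneg: "0 \<le> rate_min m"
proof -
  obtain a where "rate m a = rate_min m" using rate_min_attained by blast
  moreover have "0 \<le> ln (N m a)" using N_pos[of m a] by simp
  ultimately show ?thesis by (metis rate_def divide_nonneg_nonneg of_nat_0_le_iff)
qed

lemma rate_min_le_rate_max: "rate_min m \<le> rate_max m"
  using rate_min_le_rate rate_le_rate_max order.trans by blast

lemma rate_max_nonneg: "0 \<le> rate_max m"
  using rate_min_nonneg rate_min_le_rate_max by (rule order.trans)

lemma ln_N_le: "ln (N m a) \<le> rate_max m * len m a"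
  using rate_le_rate_max[of m a] len_pos[of m a] by (simp add: rate_def pos_divide_le_eq)

lemma ln_N_ge: "rate_min m * len m a \<le> ln (N m a)"
  using rate_min_le_rate[of m a] len_pos[of m a] by (simp add: rate_def pos_le_divide_eq)

lemma ln_card_subst_iter_le: "ln (card (\<Theta> m w)) \<le> rate_max m * (\<Sum>c\<leftarrow>w. len m c)"
proof -
  have "(\<Sum>c\<leftarrow>w. ln (N m c)) \<le> (\<Sum>c\<leftarrow>w. rate_max m * len m c)"
    by (intro sum_list_mono ln_N_le)
  also have "\<dots> = rate_max m * (\<Sum>c\<leftarrow>w. len m c)"
    by (induction w) (simp_all add: algebra_simps)
  finally show ?thesis unfolding ln_card_subst_iter .
qed

lemma ln_card_subst_iter_ge: "rate_min m * (\<Sum>c\<leftarrow>w. len m c) \<le> ln (card (\<Theta> m w))"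
proof -
  have "rate_min m * (\<Sum>c\<leftarrow>w. len m c) = (\<Sum>c\<leftarrow>w. rate_min m * len m c)"
    by (induction w) (simp_all add: algebra_simps)
  also have "\<dots> \<le> (\<Sum>c\<leftarrow>w. ln (N m c))"
    by (intro sum_list_mono ln_N_ge)
  finally show ?thesis unfolding ln_card_subst_iter .
qed

lemma ln_card_le_ln_N_add_K: "y \<in> \<Theta> K [a] \<Longrightarrow> ln (card (\<Theta> m y)) \<le> ln (N (m + K) a)"
proof -
  assume y: "y \<in> \<Theta> K [a]"
  have "\<Theta> m y \<subseteq> \<Theta> (m + K) [a]" using y by (auto simp: subst_iter_add)
  then have "card (\<Theta> m y) \<le> N (m + K) a"
    unfolding N_def by (intro card_mono finite_subst_iter)
  then show ?thesis using card_subst_iter_pos[of m y] by simp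
qed

text \<open>A letter of maximal rate occurs in every \<open>\<theta>\<^sup>K(a)\<close>; the other letters
  contribute at least the minimal rate.\<close>
lemma ln_N_add_K_ge:
  "rate_min m * len (m + K) a + (rate_max m - rate_min m) * Lmin m \<le> ln (N (m + K) a)"
proof -
  let ?s = "rate_min m"
  define f where "f x = ln (N m x) - ?s * len m x" for x
  obtain y where y: "y \<in> \<Theta> K [a]" using subst_iter_nonempty by blast
  obtain c where c: "rate m c = rate_max m" using rate_max_attained by blast
  have "(rate_max m - ?s) * Lmin m \<le> (rate_max m - ?s) * len m c"
    using rate_min_le_rate_max Lmin_le_len by (intro mult_left_mono) auto
  also have "\<dots> = f c"
    using c len_pos[of m c] by (simp add: f_def rate_def field_simps)
  also have "\<dots> \<le> (\<Sum>x\<leftarrow>y. f x)"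
    using set_subst_iter_K[OF y] ln_N_ge by (intro member_le_sum_list) (auto simp: f_def)
  also have "\<dots> = ln (card (\<Theta> m y)) - ?s * len (m + K) a"
    unfolding ln_card_subst_iter len_add_K[OF y, of m] by (induction y) (simp_all add: f_def algebra_simps)
  also have "\<dots> \<le> ln (N (m + K) a) - ?s * len (m + K) a"
    using ln_card_le_ln_N_add_K[OF y] by simp
  finally show ?thesis by simp
qed

lemma Lmax_le_Lmin_mult: "K \<le> m \<Longrightarrow> Lmax m \<le> Lmax K * Lmin m"
proof -
  assume "K \<le> m"
  then obtain m' where m: "m = m' + K" by (metis le_add_diff_inverse2)
  have "Lmax m \<le> Lmax K * Lmax m'" unfolding m by (rule Lmax_add_K)
  also have "\<dots> \<le> Lmax K * Lmin m" unfolding m using Lmax_le_Lmin_add_K by simp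
  finally show ?thesis .
qed

lemma rate_min_gain:
  assumes "Lmax m \<le> C * Lmin m"
  shows "rate_min m + (rate_max m - rate_min m) / (Lmax K * C) \<le> rate_min (m + K)"
proof -
  obtain a where a: "rate (m + K) a = rate_min (m + K)" using rate_min_attained by blast
  let ?d = "rate_max m - rate_min m" and ?L = "real (len (m + K) a)"
  have d: "0 \<le> ?d" using rate_min_le_rate_max[of m] by simp
  have L_pos: "0 < ?L" using len_pos[of "m + K" a] by simp
  have "len (m + K) a \<le> Lmax K * Lmax m"
    using len_le_Lmax[of "m + K" a] Lmax_add_K[of m] by linarith
  also have "\<dots> \<le> Lmax K * C * Lmin m" using assms by simp
  finally have L: "?L \<le> Lmax K * C * Lmin m" by (simp only: of_nat_le_iff)
  have "?d / (Lmax K * C) = ?d * Lmin m / (Lmax K * C * Lmin m)"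
    using Lmin_pos[of m] by simp
  also have "\<dots> \<le> ?d * Lmin m / ?L"
    using L L_pos d by (intro divide_left_mono mult_nonneg_nonneg) simp_all
  finally have "rate_min m + ?d / (Lmax K * C) \<le> (rate_min m * ?L + ?d * Lmin m) / ?L"
    using L_pos by (simp add: add_divide_distrib)
  also have "\<dots> \<le> rate (m + K) a"
    unfolding rate_def using ln_N_add_K_ge[of m a] L_pos by (intro divide_right_mono) simp_all
  finally show ?thesis using a by simp
qed

lemma finite_lang_len: "finite (lang_len \<theta> n)"
proof (rule finite_subset)
  show "lang_len \<theta> n \<subseteq> {xs. set xs \<subseteq> UNIV \<and> length xs = n}" by (auto simp: lang_len_def)
qed (rule finite_lists_length_eq, simp)

lemma card_lang_len_add:
  "card (lang_len \<theta> (m + n)) \<le> card (lang_len \<theta> m) * card (lang_len \<theta> n)"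
proof -
  let ?split = "\<lambda>x. (take m x, drop m x)"
  have inj: "inj_on ?split (lang_len \<theta> (m + n))"
    by (rule inj_onI) (metis append_take_drop_id prod.inject)
  have sub: "?split ` lang_len \<theta> (m + n) \<subseteq> lang_len \<theta> m \<times> lang_len \<theta> n"
  proof
    fix p assume "p \<in> ?split ` lang_len \<theta> (m + n)"
    then obtain x where x: "x \<in> lang \<theta>" "length x = m + n" "p = ?split x"
      by (auto simp: lang_len_def)
    have "sublist (take m x) x" "sublist (drop m x) x"
      by (auto intro: prefix_imp_sublist suffix_imp_sublist take_is_prefix suffix_drop)
    then show "p \<in> lang_len \<theta> m \<times> lang_len \<theta> n"
      using x lang_sublist by (auto simp: lang_len_def)
  qed
  have "card (lang_len \<theta> (m + n)) \<le> card (lang_len \<theta> m \<times> lang_len \<theta> n)"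
    by (rule card_inj_on_le[OF inj sub]) (simp add: finite_lang_len)
  then show ?thesis by (simp add: card_cartesian_product)
qed

abbreviation ln_card_lang :: "nat \<Rightarrow> real" where
  "ln_card_lang n \<equiv> ln (card (lang_len \<theta> n))"

lemma ln_card_lang_nonneg: "0 \<le> ln_card_lang n"
  by (cases "card (lang_len \<theta> n) = 0") auto

lemma ln_card_lang_add: "ln_card_lang (m + n) \<le> ln_card_lang m + ln_card_lang n"
proof (cases "card (lang_len \<theta> (m + n)) = 0")
  case True
  then show ?thesis using ln_card_lang_nonneg[of m] ln_card_lang_nonneg[of n] by simp
next
  case False
  then have "0 < card (lang_len \<theta> m) * card (lang_len \<theta> n)"
    using card_lang_len_add[of m n] by linarith
  then have pos: "0 < card (lang_len \<theta> m)" "0 < card (lang_len \<theta> n)" by auto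
  have "ln_card_lang (m + n) \<le> ln (card (lang_len \<theta> m) * card (lang_len \<theta> n))"
    using False card_lang_len_add[of m n] pos by (subst ln_le_cancel_iff) (simp_all del: of_nat_mult)
  also have "\<dots> = ln_card_lang m + ln_card_lang n" using pos by (simp add: ln_mult)
  finally show ?thesis .
qed

lemma LIMSEQ_rs_entropy: "(\<lambda>n. ln_card_lang n / n) \<longlonglongrightarrow> rs_entropy \<theta>"
proof -
  have "(\<lambda>n. ln_card_lang n / n) \<longlonglongrightarrow> (INF n\<in>{1..}. ln_card_lang n / n)"
    by (rule fekete_subadditive[OF ln_card_lang_add ln_card_lang_nonneg])
  then show ?thesis unfolding rs_entropy_def by (metis limI)
qed

lemma subst_iter_prefix_window:
  "z \<in> \<Theta> m y \<Longrightarrow> n \<le> length z \<Longrightarrow>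
    \<exists>V w. w \<in> \<Theta> m V \<and> take n z = take n w \<and> n \<le> length w \<and> length w \<le> n + Lmax m"
proof (induction y arbitrary: z n)
  case (Cons c y)
  then obtain zc z' where zz: "zc \<in> \<Theta> m [c]" "z' \<in> \<Theta> m y" "z = zc @ z'"
    by (auto simp: subst_iter_Cons[of _ _ c y] conc_iff)
  have zc: "length zc \<le> Lmax m"
    using length_subst_iter_letter[OF zz(1)] len_le_Lmax by simp
  show ?case
  proof (cases "n \<le> length zc")
    case True
    then show ?thesis using zz zc by (intro exI[of _ "[c]"] exI[of _ zc]) auto
  next
    case False
    then have "n - length zc \<le> length z'" using Cons.prems(2) zz(3) by simp
    from Cons.IH[OF zz(2) this] obtain V w where
      w: "w \<in> \<Theta> m V" "take (n - length zc) z' = take (n - length zc) w"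
        "n - length zc \<le> length w" "length w \<le> n - length zc + Lmax m" by blast
    have "zc @ w \<in> \<Theta> m (c # V)"
      unfolding subst_iter_Cons[of _ _ c V] using zz(1) w(1) by (rule concI)
    then show ?thesis using w False zz(3)
      by (intro exI[of _ "c # V"] exI[of _ "zc @ w"]) auto
  qed
qed (intro exI[of _ "[]"], auto)

text \<open>The bound \<open>n + 2 Lmax m\<close> allows one partial block \<open>\<theta>\<^sup>m(c)\<close> at each end.\<close>
lemma subst_iter_factor_window:
  "z \<in> \<Theta> m y \<Longrightarrow> i + n \<le> length z \<Longrightarrow>
    \<exists>V w j. w \<in> \<Theta> m V \<and> take n (drop i z) = take n (drop j w) \<and>
      j + n \<le> length w \<and> length w \<le> n + 2 * Lmax m"
proof (induction y arbitrary: z i)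
  case (Cons c y)
  then obtain zc z' where zz: "zc \<in> \<Theta> m [c]" "z' \<in> \<Theta> m y" "z = zc @ z'"
    by (auto simp: subst_iter_Cons[of _ _ c y] conc_iff)
  have zc: "length zc \<le> Lmax m"
    using length_subst_iter_letter[OF zz(1)] len_le_Lmax by simp
  consider "length zc \<le> i" | "i < length zc" "i + n \<le> length zc"
    | "i < length zc" "length zc < i + n" by linarith
  then show ?case
  proof cases
    case 1
    then have "i - length zc + n \<le> length z'" using Cons.prems(2) zz(3) by simp
    from Cons.IH[OF zz(2) this] obtain V w j where
      "w \<in> \<Theta> m V" "take n (drop (i - length zc) z') = take n (drop j w)"
      "j + n \<le> length w" "length w \<le> n + 2 * Lmax m" by blast
    then show ?thesis using 1 zz(3) by (intro exI[of _ V] exI[of _ w] exI[of _ j]) auto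
  next
    case 2
    then show ?thesis using zz(1,3) zc by (intro exI[of _ "[c]"] exI[of _ zc] exI[of _ i]) auto
  next
    case 3
    let ?n' = "n - (length zc - i)"
    have "?n' \<le> length z'" using Cons.prems(2) zz(3) 3 by simp
    from subst_iter_prefix_window[OF zz(2) this] obtain V w where
      w: "w \<in> \<Theta> m V" "take ?n' z' = take ?n' w" "?n' \<le> length w" "length w \<le> ?n' + Lmax m"
      by blast
    have "zc @ w \<in> \<Theta> m (c # V)"
      unfolding subst_iter_Cons[of _ _ c V] using zz(1) w(1) by (rule concI)
    moreover have "take n (drop i z) = take n (drop i (zc @ w))"
      using 3 w(2) zz(3) by simp
    ultimately show ?thesis using w(3,4) zc 3
      by (intro exI[of _ "c # V"] exI[of _ "zc @ w"] exI[of _ i]) auto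
  qed
qed (intro exI[of _ "[]"] exI[of _ "[]"] exI[of _ 0], auto)

definition short_images :: "nat \<Rightarrow> nat \<Rightarrow> 'a list set" where
  "short_images m l = (\<Union>V\<in>{V. (\<Sum>c\<leftarrow>V. len m c) \<le> l}. \<Theta> m V)"

lemma lang_len_subset_windows:
  fixes n m :: nat
  defines "l \<equiv> n + 2 * Lmax m"
  shows "lang_len \<theta> n \<subseteq> (\<lambda>(w, j). take n (drop j w)) ` (short_images m l \<times> {..l})"
proof
  fix x assume "x \<in> lang_len \<theta> n"
  then have x: "x \<in> lang \<theta>" "length x = n" by (auto simp: lang_len_def)
  obtain k b z where kz: "m \<le> k" "z \<in> \<Theta> k [b]" "sublist x z" using lang_deep[OF x(1)] by blast
  obtain y where y: "z \<in> \<Theta> m y"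
    using kz(1,2) subst_iter_add[of \<theta> m "k - m" "[b]"] by auto
  obtain p q where pq: "z = p @ x @ q" using kz(3) by (auto simp: sublist_def)
  then have "length p + n \<le> length z" using x(2) by simp
  from subst_iter_factor_window[OF y this] obtain V w j where
    w: "w \<in> \<Theta> m V" "take n (drop (length p) z) = take n (drop j w)"
      "j + n \<le> length w" "length w \<le> n + 2 * Lmax m" by blast
  have "w \<in> short_images m l"
    using w(1,4) length_subst_iter[OF w(1)] by (auto simp: short_images_def l_def)
  moreover have "x = take n (drop j w)" using w(2) pq x(2) by simp
  ultimately show "x \<in> (\<lambda>(w, j). take n (drop j w)) ` (short_images m l \<times> {..l})"
    using w(3,4) unfolding l_def by force
qed

lemma card_subst_iter_le: "real (card (\<Theta> m V)) \<le> exp (rate_max m * (\<Sum>c\<leftarrow>V. len m c))"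
proof -
  have "real (card (\<Theta> m V)) = exp (ln (card (\<Theta> m V)))"
    using card_subst_iter_pos[of m V] by simp
  also have "\<dots> \<le> exp (rate_max m * (\<Sum>c\<leftarrow>V. len m c))"
    using ln_card_subst_iter_le by simp
  finally show ?thesis .
qed

lemma card_short_images_le:
  "real (card (short_images m l)) \<le> real (l + 1) * real CARD('a) ^ (l div Lmin m) * exp (rate_max m * l)"
proof -
  let ?Vs = "{V. (\<Sum>c\<leftarrow>V. len m c) \<le> l}"
  note Vs = card_weighted_words_le[of "Lmin m" "len m" l, OF Lmin_pos Lmin_le_len]
  have "real (card (short_images m l)) \<le> (\<Sum>V\<in>?Vs. real (card (\<Theta> m V)))"
    unfolding short_images_def using card_UN_le[OF Vs(1), of "\<Theta> m"] by (simp flip: of_nat_sum)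
  also have "\<dots> \<le> (\<Sum>V\<in>?Vs. exp (rate_max m * l))"
  proof (rule sum_mono)
    fix V assume "V \<in> ?Vs"
    then have "rate_max m * (\<Sum>c\<leftarrow>V. len m c) \<le> rate_max m * l"
      using rate_max_nonneg by (intro mult_left_mono) simp_all
    then show "real (card (\<Theta> m V)) \<le> exp (rate_max m * l)"
      using card_subst_iter_le[of m V] by (meson exp_le_cancel_iff order.trans)
  qed
  also have "\<dots> \<le> real (l + 1) * real CARD('a) ^ (l div Lmin m) * exp (rate_max m * l)"
    using Vs(2) by (simp flip: of_nat_mult of_nat_power of_nat_Suc)
  finally show ?thesis .
qed

lemma ln_card_lang_le:
  fixes n m :: nat
  defines "l \<equiv> n + 2 * Lmax m"
  shows "ln_card_lang n \<le> 2 * ln (l + 1) + l / Lmin m * ln CARD('a) + rate_max m * l"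
proof (cases "card (lang_len \<theta> n) = 0")
  case True
  then show ?thesis using rate_max_nonneg[of m] by simp
next
  case False
  let ?T = "l div Lmin m"
  have fin: "finite (short_images m l)"
    unfolding short_images_def
    using card_weighted_words_le(1)[of "Lmin m" "len m" l, OF Lmin_pos Lmin_le_len]
    by (auto intro: finite_subst_iter)
  have "card (lang_len \<theta> n) \<le> card (short_images m l \<times> {..l})"
    by (rule surj_card_le[OF _ lang_len_subset_windows[of n m, folded l_def]]) (simp add: fin)
  also have "\<dots> = card (short_images m l) * (l + 1)" by (simp add: card_cartesian_product)
  finally have "real (card (lang_len \<theta> n)) \<le> real (card (short_images m l) * (l + 1))"
    by (simp only: of_nat_le_iff)
  also have "\<dots> = real (card (short_images m l)) * (l + 1)" by (simp add: algebra_simps)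
  also have "\<dots> \<le> real (l + 1) * real CARD('a) ^ ?T * exp (rate_max m * l) * real (l + 1)"
    using card_short_images_le by (intro mult_right_mono) simp_all
  finally have "ln_card_lang n \<le> ln (real (l + 1) * real CARD('a) ^ ?T * exp (rate_max m * l) * real (l + 1))"
    using False by (subst ln_le_cancel_iff) simp_all
  also have "\<dots> = 2 * ln (l + 1) + ?T * ln CARD('a) + rate_max m * l"
  proof -
    have "0 < real (l + 1)" "0 < real CARD('a)" by simp_all
    then show ?thesis by (simp add: ln_mult_pos ln_realpow)
  qed
  also have "\<dots> \<le> 2 * ln (l + 1) + l / Lmin m * ln CARD('a) + rate_max m * l"
    by (intro add_mono mult_right_mono of_nat_div_le_of_nat) simp_all
  finally show ?thesis by (simp add: add.commute)
qed

lemma rs_entropy_le_rate_max: "rs_entropy \<theta> \<le> rate_max m + ln CARD('a) / Lmin m"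
proof -
  define c where "c = real (2 * Lmax m)"
  define B where "B = ln CARD('a) / Lmin m + rate_max m"
  let ?G = "\<lambda>n::nat. (2 * ln (real n + c + 1) + (real n + c) * B) / real n"
  have "?G \<longlonglongrightarrow> B" by real_asymp
  moreover have "\<forall>\<^sub>F n in sequentially. ln_card_lang n / n \<le> ?G n"
  proof (rule eventually_mono[OF eventually_ge_at_top[of 1]])
    fix n :: nat assume "1 \<le> n"
    then show "ln_card_lang n / n \<le> ?G n"
      using ln_card_lang_le[of n m]
      by (intro divide_right_mono) (simp_all add: c_def B_def algebra_simps add_divide_distrib)
  qed
  ultimately have "rs_entropy \<theta> \<le> B"
    using LIMSEQ_rs_entropy by (intro tendsto_le[OF sequentially_bot]) auto
  then show ?thesis by (simp add: B_def)
qed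

lemma Lmin_add_mult_K: "2 \<le> CARD('a) \<Longrightarrow> 2 ^ j \<le> Lmin (r + j * K)"
proof (induction j)
  case 0
  then show ?case using Lmin_pos[of r] by simp
next
  case (Suc j)
  then have "2 ^ Suc j \<le> 2 * Lmin (r + j * K)" by simp
  also have "\<dots> \<le> Lmin (r + j * K + K)" using Lmin_add_K_double Suc.prems by blast
  finally show ?case by (simp add: algebra_simps)
qed

lemma ln_card_div_Lmin_small: "0 < \<epsilon> \<Longrightarrow> \<exists>m0. \<forall>m\<ge>m0. ln CARD('a) / Lmin m \<le> \<epsilon>"
proof (cases "2 \<le> CARD('a)")
  case False
  moreover have "0 < CARD('a)" by (rule finite_UNIV_card_ge_0) simp
  ultimately have "CARD('a) = 1" by linarith
  then show "0 < \<epsilon> \<Longrightarrow> ?thesis" by simp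
next
  case True
  assume \<epsilon>: "0 < \<epsilon>"
  obtain j where j: "ln CARD('a) / \<epsilon> < 2 ^ j" using real_arch_pow[of 2] by auto
  have "ln CARD('a) / Lmin m \<le> \<epsilon>" if m: "j * K \<le> m" for m
  proof -
    have "2 ^ j \<le> Lmin (m - j * K + j * K)" using Lmin_add_mult_K[OF True] .
    then have "(2::real) ^ j \<le> Lmin m" using m by (simp flip: of_nat_le_iff)
    then have "ln CARD('a) / Lmin m \<le> ln CARD('a) / 2 ^ j"
      using Lmin_pos[of m] by (intro divide_left_mono) simp_all
    also have "\<dots> \<le> \<epsilon>"
    proof -
      have "ln CARD('a) < 2 ^ j * \<epsilon>" using j \<epsilon> by (simp add: pos_divide_less_eq)
      then show ?thesis by (simp add: divide_le_eq mult.commute)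
    qed
    finally show ?thesis .
  qed
  then show ?thesis by blast
qed

text \<open>If the minimal rate stayed \<open>\<epsilon>\<close> below the entropy, the maximal rate would stay
  \<open>\<epsilon>/2\<close> above it for large \<open>m\<close>, and \<open>rate_min_gain\<close> would make the minimal rate
  grow without bound.\<close>
lemma rate_min_approaches: "0 < \<epsilon> \<Longrightarrow> \<exists>m. rs_entropy \<theta> - \<epsilon> < rate_min m"
proof (rule ccontr)
  let ?s = "rs_entropy \<theta>"
  assume \<epsilon>: "0 < \<epsilon>" and "\<not> (\<exists>m. ?s - \<epsilon> < rate_min m)"
  then have low: "rate_min m \<le> ?s - \<epsilon>" for m by (meson not_less)
  obtain m0 where m0: "\<And>m. m0 \<le> m \<Longrightarrow> ln CARD('a) / Lmin m \<le> \<epsilon> / 2"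
    using ln_card_div_Lmin_small[of "\<epsilon> / 2"] \<epsilon> by auto
  define \<delta> where "\<delta> = \<epsilon> / 2 / (Lmax K * Lmax K)"
  have W: "0 < Lmax K" using len_pos[of K] len_le_Lmax[of K] by (blast intro: less_le_trans)
  have step: "rate_min (m0 + K + j * K) + \<delta> \<le> rate_min (m0 + K + j * K + K)" for j
  proof -
    let ?m = "m0 + K + j * K"
    have "\<epsilon> / 2 \<le> rate_max ?m - rate_min ?m"
      using rs_entropy_le_rate_max[of ?m] m0[of ?m] low[of ?m] by linarith
    then have "\<delta> \<le> (rate_max ?m - rate_min ?m) / (Lmax K * Lmax K)"
      unfolding \<delta>_def using W by (intro divide_right_mono) simp_all
    moreover have "rate_min ?m + (rate_max ?m - rate_min ?m) / (Lmax K * Lmax K) \<le> rate_min (?m + K)"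
      by (rule rate_min_gain, rule Lmax_le_Lmin_mult) simp
    ultimately show ?thesis by linarith
  qed
  have grow: "real j * \<delta> \<le> rate_min (m0 + K + j * K)" for j
  proof (induction j)
    case 0
    then show ?case using rate_min_nonneg by simp
  next
    case (Suc j)
    then show ?case using step[of j] by (simp add: algebra_simps)
  qed
  have "0 < \<delta>" using \<epsilon> W by (simp add: \<delta>_def)
  then obtain j where "?s < real j * \<delta>" using ex_less_of_nat_mult by blast
  then show False using grow[of j] low[of "m0 + K + j * K"] \<epsilon> by linarith
qed

lemma subst_iter_periodic_words:
  assumes u: "u \<in> periodic_words \<theta> q" and z: "z \<in> \<Theta> m (word_pow u k)"
  shows "z \<in> periodic_words \<theta> (k * (\<Sum>c\<leftarrow>u. len m c))"
proof -
  have pow: "word_pow u N \<in> lang \<theta>" for N using u by (simp add: periodic_words_def)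
  have "word_pow z N \<in> lang \<theta>" for N
  proof -
    have "word_pow z N \<in> \<Theta> m (word_pow u (k * N))"
      using subst_iter_word_pow[OF z, of N] by (simp add: word_pow_mult)
    then show ?thesis by (rule subst_iter_lang[OF pow])
  qed
  moreover have "length z = k * (\<Sum>c\<leftarrow>u. len m c)"
    using length_subst_iter[OF z] by (simp add: sum_list_map_word_pow)
  ultimately show ?thesis
    using subst_iter_lang[OF pow z] by (simp add: periodic_words_def)
qed

lemma rate_min_le_per_growth:
  assumes u: "u \<in> periodic_words \<theta> q" "1 \<le> q" and k: "1 \<le> k"
  shows "ereal (rate_min m) \<le> per_growth \<theta> (k * (\<Sum>c\<leftarrow>u. len m c))"
proof -
  let ?Q = "k * (\<Sum>c\<leftarrow>u. len m c)" and ?P = "periodic_words \<theta> (k * (\<Sum>c\<leftarrow>u. len m c))"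
  have "u \<noteq> []" using u by (auto simp: periodic_words_def)
  then have "0 < (\<Sum>c\<leftarrow>u. len m c)" using len_pos by (cases u) auto
  then have Q: "0 < real ?Q" using k by simp
  have sub: "\<Theta> m (word_pow u k) \<subseteq> ?P" using subst_iter_periodic_words[OF u(1)] by blast
  have fin: "finite ?P"
    by (rule finite_subset[OF _ finite_lang_len]) (auto simp: periodic_words_def lang_len_def)
  have "rate_min m * ?Q \<le> ln (card (\<Theta> m (word_pow u k)))"
    using ln_card_subst_iter_ge[of m "word_pow u k"] by (simp add: sum_list_map_word_pow)
  also have "\<dots> \<le> ln (card ?P)"
    using card_mono[OF fin sub] card_subst_iter_pos[of m "word_pow u k"] by simp
  finally have "rate_min m \<le> ln (card ?P) / ?Q" using Q by (simp add: pos_le_divide_eq)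
  moreover have "?P \<noteq> {}" using sub subst_iter_nonempty by blast
  ultimately show ?thesis by (simp add: per_growth_def)
qed

lemma rate_min_le_limsup_per_growth:
  assumes "u \<in> periodic_words \<theta> q" "1 \<le> q"
  shows "ereal (rate_min m) \<le> limsup (per_growth \<theta>)"
proof -
  define Q where "Q = (\<Sum>c\<leftarrow>u. len m c)"
  have "u \<noteq> []" using assms by (auto simp: periodic_words_def)
  then have "0 < Q" unfolding Q_def using len_pos by (cases u) auto
  then have mono: "strict_mono (\<lambda>k. Suc k * Q)" by (intro strict_monoI) simp
  have "ereal (rate_min m) \<le> limsup (per_growth \<theta> \<circ> (\<lambda>k. Suc k * Q))"
    using rate_min_le_per_growth[OF assms, of "Suc _" m]
    by (intro le_Limsup always_eventually) (simp_all add: Q_def)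
  also have "\<dots> \<le> limsup (per_growth \<theta>)" using mono by (rule limsup_subseq_mono)
  finally show ?thesis .
qed

lemma per_growth_le: "1 \<le> n \<Longrightarrow> per_growth \<theta> n \<le> ereal (ln_card_lang n / n)"
proof (cases "periodic_words \<theta> n = {}")
  case False
  assume n: "1 \<le> n"
  have sub: "periodic_words \<theta> n \<subseteq> lang_len \<theta> n" by (auto simp: periodic_words_def lang_len_def)
  then have "card (periodic_words \<theta> n) \<le> card (lang_len \<theta> n)"
    using finite_lang_len by (rule card_mono[rotated])
  moreover have "0 < card (periodic_words \<theta> n)"
    using False finite_subset[OF sub finite_lang_len] by (simp add: card_gt_0_iff)
  ultimately have "ln (card (periodic_words \<theta> n)) / n \<le> ln_card_lang n / n"
    using n by (intro divide_right_mono) simp_all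
  then show ?thesis using False by (simp add: per_growth_def)
qed (simp add: per_growth_def)

lemma limsup_per_growth_le: "limsup (per_growth \<theta>) \<le> ereal (rs_entropy \<theta>)"
proof -
  have "limsup (per_growth \<theta>) \<le> limsup (\<lambda>n. ereal (ln_card_lang n / n))"
    by (rule Limsup_mono) (auto intro: eventually_mono[OF eventually_ge_at_top[of 1]] per_growth_le)
  also have "\<dots> = ereal (rs_entropy \<theta>)"
    using LIMSEQ_rs_entropy by (intro lim_imp_Limsup) auto
  finally show ?thesis .
qed

theorem rs_entropy_eq_limsup_per_growth:
  assumes "\<exists>q. 1 \<le> q \<and> periodic_words \<theta> q \<noteq> {}"
  shows "ereal (rs_entropy \<theta>) = limsup (per_growth \<theta>)"
proof (rule antisym)
  obtain q u where u: "u \<in> periodic_words \<theta> q" "1 \<le> q" using assms by blast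
  show "ereal (rs_entropy \<theta>) \<le> limsup (per_growth \<theta>)"
  proof (rule ereal_le_epsilon2)
    fix \<epsilon> :: real assume "0 < \<epsilon>"
    then obtain m where "rs_entropy \<theta> - \<epsilon> < rate_min m" using rate_min_approaches by blast
    then have "ereal (rs_entropy \<theta>) \<le> ereal (rate_min m) + ereal \<epsilon>" by simp
    also have "\<dots> \<le> limsup (per_growth \<theta>) + ereal \<epsilon>"
      using rate_min_le_limsup_per_growth[OF u] by (rule add_right_mono)
    finally show "ereal (rs_entropy \<theta>) \<le> limsup (per_growth \<theta>) + ereal \<epsilon>" .
  qed
  show "limsup (per_growth \<theta>) \<le> ereal (rs_entropy \<theta>)" by (rule limsup_per_growth_le)
qed

end

theorem mainTheorem15:
  fixes \<theta> :: "'a::finite \<Rightarrow> 'a list set"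
  assumes "random_subst \<theta>"
    and "primitive_subst \<theta>"
    and "semi_compatible \<theta>"
    and "\<exists>q. q \<ge> 1 \<and> periodic_words \<theta> q \<noteq> {}"
  shows "ereal (rs_entropy \<theta>) = limsup (per_growth \<theta>)"
proof -
  interpret primitive_semi_compatible \<theta> using assms(1-3) by unfold_locales
  show ?thesis using assms(4) by (rule rs_entropy_eq_limsup_per_growth)
qed

end
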